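(* Let $n\in\mathbb{N}$ and let $X$ be the set of all compact subsets of $(0,1)^n$ with nonempty interior, viewed as a Borel subset of $\mathcal{K}((0,1)^n)$. There exist Borel measurable maps $f_k:X\to(0,1)^n$, $k\in\mathbb{N}$, such that for every $K\in X$: (i) $f_k(K)\in(0,1)^n\setminus K$ for all $k$; (ii) the sequence $(f_k(K))_{k=1}^\infty$ is injective; (iii) $\overline{\{f_k(K):k\in\mathbb{N}\}}=\{f_k(K):k\in\mathbb{N}\}\cup\partial K$; (iv) for every $l\in\mathbb{N}$ the point $f_l(K)$ is isolated in $\overline{\{f_k(K):k\in\mathbb{N}\}}$.
   Context: $\mathcal{K}(Z)$ is the space of compact subsets of $Z$ with the Vietoris topology. Closures, interiors and boundaries are taken in $\mathbb{R}^n$. *)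

theory Defs
  imports "HOL-Analysis.Analysis"
begin

definition vietoris :: "'a::topological_space set \<Rightarrow> 'a set topology" where
  "vietoris Z = subtopology
     (topology_generated_by
        ({{K. K \<subseteq> U} | U. openin (top_of_set Z) U} \<union>
         {{K. K \<inter> U \<noteq> {}} | U. openin (top_of_set Z) U}))
     {K. compact K \<and> K \<subseteq> Z}"

definition borel_of :: "'a topology \<Rightarrow> 'a measure" where
  "borel_of T = sigma (topspace T) {U. openin T U}"

end

theory Submission
  imports Defs
begin

text \<open>The points are the centres g of the dyadic subcubes of side 2^-m of the unit cube whose
  distance to K is comparable to their scale, n 2^-m < d(g,K) \<le> 5 n 2^-m. Only finitely many of
  them lie at distance \<ge> t > 0 from K, so they can accumulate only at K; as they avoid K they
  accumulate only at the frontier, and each of them is isolated. Conversely, every point q \<notin> K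
  close to K has such a centre nearer to q than d(q,K), so every frontier point is a limit of them.
  Measurability holds because K \<mapsto> d(g,K) is Borel on the Vietoris space,
  {K. r < d(g,K)} being the open set of compacta inside the complement of a closed ball; the
  selected centres are enumerated along a fixed enumeration of all dyadic centres.\<close>

lemma space_borel_of: "space (borel_of T) = topspace T"
  unfolding borel_of_def by (rule space_measure_of_conv)

lemma borel_of_open: "openin T U \<Longrightarrow> U \<in> sets (borel_of T)"
  unfolding borel_of_def by (subst sets_measure_of) (auto dest: openin_subset)

lemma topspace_vietoris: "topspace (vietoris Z) = {K. compact K \<and> K \<subseteq> Z}"
proof -
  have "{K. K \<subseteq> Z} \<in> {{K. K \<subseteq> U} | U. openin (top_of_set Z) U}"
    by auto
  then have "{K. compact K \<and> K \<subseteq> Z} \<subseteq> \<Union>({{K. K \<subseteq> U} | U. openin (top_of_set Z) U} \<union>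
         {{K. K \<inter> U \<noteq> {}} | U. openin (top_of_set Z) U})"
    by (intro subset_trans[OF _ Union_upper]) auto
  then show ?thesis
    unfolding vietoris_def topspace_subtopology topology_generated_by_topspace by (rule Int_absorb1)
qed

lemma openin_vietoris_subsets:
  assumes "openin (top_of_set Z) U"
  shows "openin (vietoris Z) {K. compact K \<and> K \<subseteq> U}"
proof -
  have "openin (topology_generated_by
      ({{K. K \<subseteq> U} | U. openin (top_of_set Z) U} \<union>
       {{K. K \<inter> U \<noteq> {}} | U. openin (top_of_set Z) U})) {K. K \<subseteq> U}"
    unfolding openin_topology_generated_by_iff
    by (rule generate_topology_on.Basis) (use assms in blast)
  then have "openin (vietoris Z) ({K. K \<subseteq> U} \<inter> {K. compact K \<and> K \<subseteq> Z})"
    unfolding vietoris_def by (rule openin_subtopology_Int)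
  moreover have "{K. K \<subseteq> U} \<inter> {K. compact K \<and> K \<subseteq> Z} = {K. compact K \<and> K \<subseteq> U}"
    using openin_imp_subset[OF assms] by auto
  ultimately show ?thesis by simp
qed

lemma less_infdist_iff_subset_Compl_cball:
  fixes K :: "'a::heine_borel set"
  assumes "closed K" "K \<noteq> {}"
  shows "r < infdist g K \<longleftrightarrow> K \<subseteq> - cball g r"
proof
  assume "r < infdist g K"
  then show "K \<subseteq> - cball g r"
    using infdist_le[of _ K g] by (force simp: mem_cball)
next
  assume "K \<subseteq> - cball g r"
  moreover obtain y where "y \<in> K" "infdist g K = dist g y"
    using infdist_attains_inf[OF assms] by blast
  ultimately show "r < infdist g K" by (auto simp: mem_cball)
qed

lemma borel_measurable_infdist_vietoris:
  fixes Z :: "'a::heine_borel set"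
  assumes X: "X \<subseteq> {K. compact K \<and> K \<noteq> {} \<and> K \<subseteq> Z}"
  shows "(\<lambda>K. infdist g K) \<in> borel_measurable (borel_of (subtopology (vietoris Z) X))"
  unfolding borel_measurable_iff_greater
proof
  fix r
  have "openin (top_of_set Z) (Z \<inter> - cball g r)"
    by (intro openin_open_Int open_Compl closed_cball)
  then have "openin (subtopology (vietoris Z) X) (X \<inter> {K. compact K \<and> K \<subseteq> Z \<inter> - cball g r})"
    by (rule openin_subtopology_Int2[OF openin_vietoris_subsets])
  moreover have "r < infdist g K \<longleftrightarrow> compact K \<and> K \<subseteq> Z \<inter> - cball g r" if "K \<in> X" for K
    using X that less_infdist_iff_subset_Compl_cball[OF compact_imp_closed, of K r g] by auto
  then have "{K \<in> space (borel_of (subtopology (vietoris Z) X)). r < infdist g K}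
      = X \<inter> {K. compact K \<and> K \<subseteq> Z \<inter> - cball g r}"
    using X by (auto simp: space_borel_of topspace_vietoris)
  ultimately show "{K \<in> space (borel_of (subtopology (vietoris Z) X)). r < infdist g K}
      \<in> sets (borel_of (subtopology (vietoris Z) X))"
    by (simp add: borel_of_open)
qed

lemma measurable_enumerate:
  fixes P :: "nat \<Rightarrow> 'a \<Rightarrow> bool"
  assumes "\<And>i. Measurable.pred M (P i)"
  shows "(\<lambda>x. enumerate {i. P i x} k) \<in> measurable M (count_space UNIV)"
  using assms
proof (induction k arbitrary: P)
  case 0
  then show ?case by (simp add: enumerate_0 measurable_Least)
next
  case (Suc k)
  note [measurable] = Suc.prems
  have "{i. P i x} - {LEAST n. n \<in> {i. P i x}} = {i. P i x \<and> i \<noteq> (LEAST i. P i x)}" for x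
    by auto
  then have "(\<lambda>x. enumerate {i. P i x} (Suc k)) = (\<lambda>x. enumerate {i. P i x \<and> i \<noteq> (LEAST i. P i x)} k)"
    by (simp add: enumerate_Suc)
  moreover have "(\<lambda>x. enumerate {i. P i x \<and> i \<noteq> (LEAST i. P i x)} k) \<in> measurable M (count_space UNIV)"
    by (rule Suc.IH) measurable
  ultimately show ?case by simp
qed

definition dyadic_centres :: "nat \<Rightarrow> (real^'n) set" where
  "dyadic_centres m = {x. \<forall>i. \<exists>j::nat. j < 2^m \<and> x$i = (2 * real j + 1) / 2^Suc m}"

lemma One_cart_nth: "(One :: real^'n) $ i = 1"
  by (metis one_index Cart_1)

lemma finite_dyadic_centres: "finite (dyadic_centres m :: (real^'n) set)"
proof -
  let ?A = "(\<lambda>j::nat. (2 * real j + 1) / 2^Suc m) ` {..<2^m}"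
  have "dyadic_centres m \<subseteq> vec_lambda ` (PiE UNIV (\<lambda>i::'n. ?A))"
  proof
    fix x :: "real^'n"
    assume "x \<in> dyadic_centres m"
    then have "(\<lambda>i. x$i) \<in> PiE UNIV (\<lambda>i. ?A)"
      by (force simp: dyadic_centres_def PiE_def)
    then show "x \<in> vec_lambda ` (PiE UNIV (\<lambda>i::'n. ?A))"
      by (rule rev_image_eqI) simp
  qed
  then show ?thesis
    by (rule finite_subset) (intro finite_imageI finite_PiE; simp)
qed

lemma dyadic_centres_subset_box: "dyadic_centres m \<subseteq> box 0 (One :: real^'n)"
proof
  fix x :: "real^'n"
  assume x: "x \<in> dyadic_centres m"
  have "0 < x$i \<and> x$i < 1" for i
  proof -
    obtain j :: nat where j: "j < 2^m" "x$i = (2 * real j + 1) / 2^Suc m"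
      using x by (auto simp: dyadic_centres_def)
    have "real (2 * j + 1) < real (2^Suc m)"
      using j(1) by (simp only: of_nat_less_iff) simp
    then show ?thesis
      unfolding j(2) by (simp add: divide_less_eq_1 zero_less_divide_iff)
  qed
  then show "x \<in> box 0 One"
    unfolding mem_box_cart One_cart_nth zero_index by blast
qed

lemma dyadic_centre_near:
  fixes q :: "real^'n"
  assumes "q \<in> box 0 One"
  obtains g where "g \<in> dyadic_centres m" "dist g q \<le> real CARD('n) * (1/2)^m / 2"
proof -
  define j where "j i = nat \<lfloor>q$i * 2^m\<rfloor>" for i
  define g where "g = (\<chi> i. (2 * real (j i) + 1) / 2^Suc m :: real^'n)"
  have q01: "0 < q$i" "q$i < 1" for i
    using assms unfolding mem_box_cart One_cart_nth zero_index by auto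
  have j_floor: "real (j i) \<le> q$i * 2^m" "q$i * 2^m < real (j i) + 1" for i
  proof -
    have "real (j i) = \<lfloor>q$i * 2^m\<rfloor>"
      using q01[of i] by (simp add: j_def)
    then show "real (j i) \<le> q$i * 2^m" "q$i * 2^m < real (j i) + 1"
      by linarith+
  qed
  have "j i < 2^m" for i
  proof -
    have "q$i * 2^m < 2^m"
      using q01[of i] by simp
    then have "real (j i) < 2^m"
      using j_floor(1)[of i] by linarith
    then show ?thesis
      by (metis of_nat_less_iff of_nat_numeral of_nat_power)
  qed
  then have "g \<in> dyadic_centres m"
    by (auto simp: dyadic_centres_def g_def)
  moreover have "\<bar>(g - q)$i\<bar> \<le> 1 / 2^Suc m" for i
  proof -
    have "(g - q)$i = (2 * real (j i) + 1 - 2 * (q$i * 2^m)) / 2^Suc m"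
      by (simp add: g_def field_simps)
    moreover have "\<bar>2 * real (j i) + 1 - 2 * (q$i * 2^m)\<bar> \<le> 1"
      using j_floor[of i] by linarith
    ultimately show ?thesis
      by (simp add: divide_right_mono)
  qed
  then have "dist g q \<le> real CARD('n) * (1/2)^m / 2"
    using norm_le_l1_cart[of "g - q"] sum_mono[of UNIV "\<lambda>i. \<bar>(g - q)$i\<bar>" "\<lambda>_. 1 / 2^Suc m"]
    by (simp add: dist_norm power_divide)
  ultimately show ?thesis
    using that by blast
qed

lemma infinite_Union_dyadic_centres: "infinite (\<Union>m. dyadic_centres m :: (real^'n) set)"
proof -
  have "inj (\<lambda>m. \<chi> i. 1 / 2^Suc m :: real^'n)"
    by (rule injI) (simp add: vec_eq_iff)
  moreover have "range (\<lambda>m. \<chi> i. 1 / 2^Suc m :: real^'n) \<subseteq> (\<Union>m. dyadic_centres m)"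
    by (auto simp: dyadic_centres_def intro: exI[of _ 0])
  ultimately show ?thesis
    using infinite_super range_inj_infinite by blast
qed

lemma exists_dyadic_scale:
  fixes c s :: real
  assumes "0 < s" "s \<le> c"
  obtains m where "c * (1/2)^Suc m < s" "s \<le> c * (1/2)^m"
proof -
  obtain M where "(1/2::real)^M < s / c"
    using real_arch_pow_inv[of "s / c" "1/2"] assms by auto
  then have M: "c * (1/2)^M < s"
    using assms by (simp add: field_simps)
  define m' where "m' = (LEAST m. c * (1/2)^m < s)"
  have m': "c * (1/2)^m' < s"
    unfolding m'_def using M by (rule LeastI)
  moreover have "m' \<noteq> 0"
    using m' assms(2) by (cases m') auto
  then obtain m where m: "m' = Suc m"
    using not0_implies_Suc by blast
  moreover have "\<not> c * (1/2)^m < s"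
    using not_less_Least[of m "\<lambda>m. c * (1/2)^m < s"] m by (simp add: m'_def)
  ultimately show ?thesis
    using that by auto
qed

text \<open>The scale n 2^-m is twice the bound of \<open>dyadic_centre_near\<close>; the factor 5 is the slack
  needed in \<open>whitney_point_near\<close>.\<close>
definition whitney_points :: "(real^'n) set \<Rightarrow> (real^'n) set" where
  "whitney_points K = {g. \<exists>m. g \<in> dyadic_centres m \<and>
     real CARD('n) * (1/2)^m < infdist g K \<and> infdist g K \<le> 5 * (real CARD('n) * (1/2)^m)}"

lemma whitney_points_subset_box: "whitney_points K \<subseteq> box 0 One"
  using dyadic_centres_subset_box by (auto simp: whitney_points_def)

lemma whitney_points_subset_dyadic_centres: "whitney_points K \<subseteq> (\<Union>m. dyadic_centres m)"
  by (auto simp: whitney_points_def)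

lemma infdist_whitney_point_pos:
  fixes K :: "(real^'n) set"
  assumes "g \<in> whitney_points K"
  shows "0 < infdist g K"
proof -
  obtain m where "real CARD('n) * (1/2)^m < infdist g K"
    using assms by (auto simp: whitney_points_def)
  moreover have "0 < real CARD('n) * (1/2::real)^m"
    by simp
  ultimately show ?thesis
    by linarith
qed

lemma whitney_points_disjoint: "whitney_points (K :: (real^'n) set) \<inter> K = {}"
  using infdist_whitney_point_pos by fastforce

lemma finite_whitney_points_far:
  fixes K :: "(real^'n) set"
  assumes "0 < t"
  shows "finite {g \<in> whitney_points K. t \<le> infdist g K}"
proof -
  let ?c = "real CARD('n)"
  obtain M where M: "(1/2::real)^M < t / (5 * ?c)"
    using real_arch_pow_inv[of "t / (5 * ?c)" "1/2"] assms by auto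
  have "{g \<in> whitney_points K. t \<le> infdist g K} \<subseteq> (\<Union>m<M. dyadic_centres m)"
  proof
    fix g
    assume g: "g \<in> {g \<in> whitney_points K. t \<le> infdist g K}"
    then obtain m where m: "g \<in> dyadic_centres m" "infdist g K \<le> 5 * (?c * (1/2)^m)"
      by (auto simp: whitney_points_def)
    have "m < M"
    proof (rule ccontr)
      assume "\<not> m < M"
      then have "(1/2::real)^m \<le> (1/2)^M"
        by (intro power_decreasing) auto
      then have "(1/2::real)^m < t / (5 * ?c)"
        using M by linarith
      then have "5 * (?c * (1/2)^m) < t"
        by (simp add: field_simps)
      then show False
        using m(2) g by auto
    qed
    then show "g \<in> (\<Union>m<M. dyadic_centres m)"
      using m by auto
  qed
  then show ?thesis
    by (rule finite_subset) (auto intro: finite_dyadic_centres)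
qed

lemma not_islimpt_whitney_points:
  fixes K :: "(real^'n) set"
  assumes "0 < infdist x K"
  shows "\<not> x islimpt whitney_points K"
proof
  assume lim: "x islimpt whitney_points K"
  let ?F = "{g \<in> whitney_points K. infdist x K / 2 \<le> infdist g K}"
  have "x islimpt ?F"
    unfolding islimpt_approachable
  proof (intro allI impI)
    fix e :: real
    assume "0 < e"
    then obtain y where y: "y \<in> whitney_points K" "y \<noteq> x" "dist y x < min e (infdist x K / 2)"
      using lim assms unfolding islimpt_approachable by (metis half_gt_zero min_less_iff_conj)
    have "infdist x K \<le> infdist y K + dist x y"
      by (rule infdist_triangle)
    then show "\<exists>y'\<in>?F. y' \<noteq> x \<and> dist y' x < e"
      using y by (auto simp: dist_commute)
  qed
  moreover have "finite ?F"
    using finite_whitney_points_far[of "infdist x K / 2" K] assms by simp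
  ultimately show False
    using islimpt_finite by blast
qed

lemma closure_whitney_points_subset:
  fixes K :: "(real^'n) set"
  assumes "K \<noteq> {}"
  shows "closure (whitney_points K) \<subseteq> whitney_points K \<union> frontier K"
proof
  fix x
  assume x: "x \<in> closure (whitney_points K)"
  show "x \<in> whitney_points K \<union> frontier K"
  proof (cases "x \<in> whitney_points K")
    case False
    then have "x islimpt whitney_points K"
      using x by (auto simp: closure_def)
    then have "infdist x K = 0"
      using not_islimpt_whitney_points infdist_nonneg[of x K] by force
    then have "x \<in> closure K"
      using in_closure_iff_infdist_zero[OF assms] by simp
    moreover have "x \<notin> interior K"
    proof
      assume "x \<in> interior K"
      then obtain e where "0 < e" "ball x e \<subseteq> K"
        unfolding mem_interior by blast
      moreover obtain y where "y \<in> whitney_points K" "dist y x < e"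
        using x \<open>0 < e\<close> unfolding closure_approachable by blast
      ultimately show False
        using whitney_points_disjoint by (force simp: dist_commute)
    qed
    ultimately show ?thesis
      by (simp add: frontier_def)
  qed simp
qed

lemma whitney_point_near:
  fixes q :: "real^'n"
  assumes "q \<in> box 0 One" "0 < infdist q K" "infdist q K \<le> 1"
  obtains g where "g \<in> whitney_points K" "dist g q < infdist q K"
proof -
  let ?c = "real CARD('n)"
  let ?t = "infdist q K"
  have "0 < CARD('n)"
    by simp
  then have "?t / 2 \<le> ?c"
    using assms(3) by linarith
  then obtain m where m: "?c * (1/2)^Suc m < ?t / 2" "?t / 2 \<le> ?c * (1/2)^m"
    using exists_dyadic_scale[of "?t / 2" ?c] assms(2) by auto
  define \<delta> where "\<delta> = ?c * (1/2)^Suc m"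
  have \<delta>: "0 < \<delta>" "\<delta> < ?t / 2" "?t \<le> 4 * \<delta>"
    using m by (simp_all add: \<delta>_def)
  obtain g where g: "g \<in> dyadic_centres (Suc m)" "dist g q \<le> \<delta> / 2"
    using dyadic_centre_near[OF assms(1)] unfolding \<delta>_def by blast
  have "?t \<le> infdist g K + dist q g" "infdist g K \<le> ?t + dist g q"
    by (rule infdist_triangle)+
  then have "\<delta> < infdist g K" "infdist g K \<le> 5 * \<delta>"
    using g(2) \<delta> by (simp_all add: dist_commute)
  then have "g \<in> whitney_points K"
    using g(1) unfolding whitney_points_def \<delta>_def by blast
  moreover have "dist g q < ?t"
    using g(2) \<delta> by linarith
  ultimately show ?thesis
    using that by blast
qed

lemma frontier_subset_closure_whitney_points:
  fixes K :: "(real^'n) set"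
  assumes "closed K" "frontier K \<subseteq> box 0 One"
  shows "frontier K \<subseteq> closure (whitney_points K)"
proof
  fix p
  assume p: "p \<in> frontier K"
  then have "p \<in> K" "p \<notin> interior K"
    using assms(1) by (auto simp: frontier_def)
  obtain r where r: "0 < r" "ball p r \<subseteq> box 0 One"
    using p assms(2) open_box open_contains_ball by blast
  show "p \<in> closure (whitney_points K)"
    unfolding closure_approachable
  proof (intro allI impI)
    fix e :: real
    assume "0 < e"
    define \<epsilon> where "\<epsilon> = min (min (e / 2) r) 1"
    have "0 < \<epsilon>"
      using \<open>0 < e\<close> r by (simp add: \<epsilon>_def)
    then obtain q where q: "q \<in> ball p \<epsilon>" "q \<notin> K"
      using \<open>p \<notin> interior K\<close> unfolding mem_interior by blast
    have "q \<in> box 0 One"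
      using q(1) r(2) by (auto simp: \<epsilon>_def)
    moreover have "0 < infdist q K"
      using infdist_pos_not_in_closed assms(1) q(2) \<open>p \<in> K\<close> by blast
    moreover have close: "infdist q K \<le> dist q p" "dist q p < \<epsilon>"
      using infdist_le[OF \<open>p \<in> K\<close>, of q] q(1) by (simp_all add: dist_commute)
    moreover have "\<epsilon> \<le> 1" "2 * \<epsilon> \<le> e"
      by (simp_all add: \<epsilon>_def)
    ultimately obtain g where g: "g \<in> whitney_points K" "dist g q < infdist q K"
      using whitney_point_near[of q K] by force
    have "dist g p \<le> dist g q + dist q p"
      by (rule dist_triangle)
    then have "dist g p < e"
      using g(2) close \<open>2 * \<epsilon> \<le> e\<close> by linarith
    then show "\<exists>g\<in>whitney_points K. dist g p < e"
      using g(1) by blast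
  qed
qed

lemma closure_whitney_points:
  fixes K :: "(real^'n) set"
  assumes "closed K" "K \<noteq> {}" "frontier K \<subseteq> box 0 One"
  shows "closure (whitney_points K) = whitney_points K \<union> frontier K"
  using closure_whitney_points_subset[OF assms(2)] frontier_subset_closure_whitney_points[OF assms(1,3)]
    closure_subset by blast

lemma whitney_point_isolated:
  fixes K :: "(real^'n) set"
  assumes "K \<noteq> {}" "g \<in> whitney_points K"
  shows "g isolated_in closure (whitney_points K)"
  unfolding isolated_in_islimpt_iff
proof
  have "0 < infdist g K"
    using infdist_whitney_point_pos[OF assms(2)] .
  moreover have "\<not> g islimpt frontier K"
  proof
    assume "g islimpt frontier K"
    then have "g \<in> closure K"
      using frontier_closed closed_limpt by (fastforce simp: frontier_def)
    then show False
      using \<open>0 < infdist g K\<close> in_closure_iff_infdist_zero[OF assms(1)] by simp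
  qed
  ultimately show "\<not> g islimpt closure (whitney_points K)"
    using not_islimpt_whitney_points islimpt_subset[OF _ closure_whitney_points_subset[OF assms(1)]]
    by (auto simp: islimpt_Un)
  show "g \<in> closure (whitney_points K)"
    using assms(2) closure_subset by blast
qed

lemma infinite_whitney_points:
  fixes K :: "(real^'n) set"
  assumes "compact K" "K \<noteq> {}" "frontier K \<subseteq> box 0 One"
  shows "infinite (whitney_points K)"
proof
  assume fin: "finite (whitney_points K)"
  have "K \<noteq> UNIV"
    using assms(1) not_bounded_UNIV compact_imp_bounded by blast
  then obtain p where p: "p \<in> frontier K"
    using assms(2) frontier_eq_empty by blast
  have "closure (whitney_points K) = whitney_points K"
    using fin finite_imp_closed closure_closed by blast
  then have "p \<in> whitney_points K"
    using frontier_subset_closure_whitney_points[OF compact_imp_closed[OF assms(1)] assms(3)] p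
    by blast
  moreover have "p \<in> K"
    using p compact_imp_closed[OF assms(1)] by (simp add: frontier_def)
  ultimately show False
    using whitney_points_disjoint by blast
qed

lemma measurable_whitney_points_mem:
  fixes g :: "real^'n"
  assumes "X \<subseteq> {K. compact K \<and> K \<noteq> {} \<and> K \<subseteq> box 0 One}"
  shows "Measurable.pred (borel_of (subtopology (vietoris (box 0 One)) X)) (\<lambda>K. g \<in> whitney_points K)"
proof -
  note [measurable] = borel_measurable_infdist_vietoris[OF assms, of g]
  show ?thesis
    unfolding whitney_points_def mem_Collect_eq by measurable
qed

definition dyadic_enum :: "nat \<Rightarrow> real^'n" where
  "dyadic_enum = from_nat_into (\<Union>m. dyadic_centres m)"

lemma bij_dyadic_enum: "bij_betw dyadic_enum UNIV (\<Union>m. dyadic_centres m :: (real^'n) set)"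
proof -
  have "countable (\<Union>m. dyadic_centres m :: (real^'n) set)"
    by (rule countable_UN) (auto intro: countable_finite finite_dyadic_centres)
  then show ?thesis
    unfolding dyadic_enum_def using bij_betw_from_nat_into infinite_Union_dyadic_centres by blast
qed

definition whitney_sequence :: "(real^'n) set \<Rightarrow> nat \<Rightarrow> real^'n" where
  "whitney_sequence K k = dyadic_enum (enumerate {i. dyadic_enum i \<in> whitney_points K} k)"

lemma measurable_whitney_sequence:
  assumes "X \<subseteq> {K. compact K \<and> K \<noteq> {} \<and> K \<subseteq> box 0 One}"
  shows "(\<lambda>K. whitney_sequence K k) \<in> borel_measurable (borel_of (subtopology (vietoris (box 0 One)) X))"
  unfolding whitney_sequence_def
  by (intro measurable_compose[OF measurable_enumerate] measurable_whitney_points_mem[OF assms]) simp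

lemma dyadic_enum_image_whitney_indices:
  "dyadic_enum ` {i. dyadic_enum i \<in> whitney_points K} = whitney_points K"
proof -
  have "whitney_points K \<subseteq> range dyadic_enum"
    using bij_betw_imp_surj_on[OF bij_dyadic_enum] whitney_points_subset_dyadic_centres by metis
  then show ?thesis
    by blast
qed

lemma infinite_whitney_indices:
  fixes K :: "(real^'n) set"
  assumes "compact K" "K \<noteq> {}" "frontier K \<subseteq> box 0 One"
  shows "infinite {i. dyadic_enum i \<in> whitney_points K}"
proof
  assume "finite {i. dyadic_enum i \<in> whitney_points K}"
  then have "finite (dyadic_enum ` {i. dyadic_enum i \<in> whitney_points K})"
    by (rule finite_imageI)
  then show False
    using infinite_whitney_points[OF assms] dyadic_enum_image_whitney_indices by metis
qed

lemma range_whitney_sequence: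
  fixes K :: "(real^'n) set"
  assumes "compact K" "K \<noteq> {}" "frontier K \<subseteq> box 0 One"
  shows "range (whitney_sequence K) = whitney_points K"
  using range_enumerate[OF infinite_whitney_indices[OF assms]] dyadic_enum_image_whitney_indices
  by (simp add: whitney_sequence_def[abs_def] image_image[symmetric])

lemma inj_whitney_sequence:
  fixes K :: "(real^'n) set"
  assumes "compact K" "K \<noteq> {}" "frontier K \<subseteq> box 0 One"
  shows "inj (whitney_sequence K)"
  using inj_compose[OF bij_betw_imp_inj_on[OF bij_dyadic_enum]
      inj_enumerate[OF infinite_whitney_indices[OF assms]]]
  by (simp add: whitney_sequence_def[abs_def] comp_def)

theorem lemma3p18:
  defines "X \<equiv> {K :: (real^'n) set. compact K \<and> K \<subseteq> box 0 One \<and> interior K \<noteq> {}}"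
  shows "\<exists>f :: nat \<Rightarrow> (real^'n) set \<Rightarrow> real^'n.
           (\<forall>k. f k \<in> measurable (borel_of (subtopology (vietoris (box 0 One)) X)) borel) \<and>
           (\<forall>K\<in>X.
              (\<forall>k. f k K \<in> box 0 One - K) \<and>
              inj (\<lambda>k. f k K) \<and>
              closure (range (\<lambda>k. f k K)) = range (\<lambda>k. f k K) \<union> frontier K \<and>
              (\<forall>l. f l K isolated_in closure (range (\<lambda>k. f k K))))"
proof -
  have X: "X \<subseteq> {K. compact K \<and> K \<noteq> {} \<and> K \<subseteq> box 0 One}"
    unfolding X_def by auto
  have "(\<forall>k. whitney_sequence K k \<in> box 0 One - K) \<and> inj (whitney_sequence K) \<and>
      closure (range (whitney_sequence K)) = range (whitney_sequence K) \<union> frontier K \<and>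
      (\<forall>l. whitney_sequence K l isolated_in closure (range (whitney_sequence K)))"
    if "K \<in> X" for K
  proof (intro conjI allI)
    have K: "compact K" "K \<noteq> {}" "frontier K \<subseteq> box 0 One"
      using that X frontier_subset_compact by (auto simp: X_def)
    note range = range_whitney_sequence[OF K]
    show "whitney_sequence K k \<in> box 0 One - K" for k
      using range whitney_points_subset_box whitney_points_disjoint by blast
    show "inj (whitney_sequence K)"
      using inj_whitney_sequence[OF K] .
    show "closure (range (whitney_sequence K)) = range (whitney_sequence K) \<union> frontier K"
      unfolding range by (rule closure_whitney_points[OF compact_imp_closed[OF K(1)] K(2,3)])
    show "whitney_sequence K l isolated_in closure (range (whitney_sequence K))" for l
      unfolding range by (rule whitney_point_isolated[OF K(2)]) (use range in blast)
  qed
  then show ?thesis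
    using measurable_whitney_sequence[OF X]
    by (intro exI[of _ "\<lambda>k K. whitney_sequence K k"]) blast
qed

end
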